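(* Consider a convex $n$-gon with vertices $0,\dots,n-1$ in cyclic order, integers $0<a<b<c<n-1$, and $V_R=\{0,\dots,a-1\}$, $V_B=\{a,\dots,b-1\}$, $V_L=\{b,\dots,c-1\}$, $V_T=\{c,\dots,n-1\}$, with $|V_L|\ge3$, $|V_R|\ge 3$, $|V_T|\ge 2$, $|V_B|\ge2$. Let $B_Q$ be the set of all edges joining a vertex of $V_R$ to a vertex of $V_L$ together with all edges joining a vertex of $V_T$ to a vertex of $V_B$. Let $B_T$ be a saturated blocker for triangulations of the convex polygon with vertex set $V_T\cup\{0,c-1\}$, and $B_B$ a saturated blocker for triangulations of the convex polygon with vertex set $V_B\cup\{a-1,b\}$. Then $B_M=\big(B_Q\setminus\{(0,c-1),(a-1,b)\}\big)\cup B_T\cup B_B$ is a saturated blocker for triangulations of the $n$-gon, of size $|V_T||V_B|+|V_L||V_R|+|B_T|+|B_B|-2$.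
   Context: An edge $(i,j)$ is the segment between vertices $i,j$; boundary edges of a convex polygon join cyclically consecutive vertices, diagonals are the other edges. Two edges cross if they share an interior point. A triangulation of a convex polygon is a maximal set of pairwise non-crossing diagonals of it. A blocker is a set $B$ of diagonals having a diagonal in common with every triangulation; it is saturated if for every $e\in B$, $B\setminus\{e\}$ is not a blocker. *)

theory Defs
  imports Main
begin

text \<open>Vertices of a convex polygon are natural numbers; a convex polygon is given by
its finite vertex set S, the cyclic order being the natural order of S.
An edge (i,j) is represented as the pair with i < j.\<close>

definition edge_cross :: "nat \<times> nat \<Rightarrow> nat \<times> nat \<Rightarrow> bool" where
  "edge_cross e f \<longleftrightarrow>
     (fst e < fst f \<and> fst f < snd e \<and> snd e < snd f) \<or>
     (fst f < fst e \<and> fst e < snd f \<and> snd f < snd e)"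

text \<open>Diagonals: edges between vertices of S that are not cyclically consecutive in S,
i.e. some vertex of S lies strictly between them and some vertex of S lies outside.\<close>
definition diagonals :: "nat set \<Rightarrow> (nat \<times> nat) set" where
  "diagonals S = {(i, j). i \<in> S \<and> j \<in> S \<and> i < j \<and>
                   (\<exists>k\<in>S. i < k \<and> k < j) \<and> (\<exists>k\<in>S. k < i \<or> j < k)}"

definition noncrossing :: "(nat \<times> nat) set \<Rightarrow> bool" where
  "noncrossing T \<longleftrightarrow> (\<forall>e\<in>T. \<forall>f\<in>T. \<not> edge_cross e f)"

definition triangulation :: "nat set \<Rightarrow> (nat \<times> nat) set \<Rightarrow> bool" where
  "triangulation S T \<longleftrightarrow> T \<subseteq> diagonals S \<and> noncrossing T \<and>
     (\<forall>T'. T \<subseteq> T' \<and> T' \<subseteq> diagonals S \<and> noncrossing T' \<longrightarrow> T' = T)"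

definition blocker :: "nat set \<Rightarrow> (nat \<times> nat) set \<Rightarrow> bool" where
  "blocker S B \<longleftrightarrow> B \<subseteq> diagonals S \<and> (\<forall>T. triangulation S T \<longrightarrow> B \<inter> T \<noteq> {})"

definition saturated_blocker :: "nat set \<Rightarrow> (nat \<times> nat) set \<Rightarrow> bool" where
  "saturated_blocker S B \<longleftrightarrow> blocker S B \<and> (\<forall>e\<in>B. \<not> blocker S (B - {e}))"

end

(* Every triangulation of the n-gon contains a diagonal joining opposite arcs, V_R to V_L or V_B to V_T:
   among the diagonals and sides from V_R to a vertex beyond V_B take a shortest one; unless it already
   joins V_R to V_L, the apex k of the triangle it bounds gives a shorter such edge (k in V_R or V_T) or
   an opposite diagonal (k in V_B or V_L). Such a diagonal lies in B_M unless it is (0, c - 1) or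
   (a - 1, b), and then the triangulation restricts to the polygon on V_T and {0, c - 1}, or on V_B and
   {a - 1, b}, where it meets B_T or B_B. Saturation: every e in B_M is the only edge of B_M in some
   triangulation. Cut the n-gon along e, or along (0, c - 1) or (a - 1, b) when e lies in B_T or B_B,
   using on the small side a triangulation that avoids B_T - {e} or B_B - {e}; every other piece is
   filled by two fans whose apexes are chosen so that no fan edge lies in B_M. The count holds since
   B_Q, B_T and B_B are pairwise disjoint. *)

theory Submission
  imports Defs
begin

lemma edge_cross_commute: "edge_cross e f = edge_cross f e"
  unfolding edge_cross_def by auto

lemma edge_cross_Pair:
  "edge_cross (x, y) (u, w) \<longleftrightarrow> x < u \<and> u < y \<and> y < w \<or> u < x \<and> x < w \<and> w < y"
  unfolding edge_cross_def by simp

lemma mem_diagonals_iff: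
  "(x, y) \<in> diagonals S \<longleftrightarrow>
     x \<in> S \<and> y \<in> S \<and> x < y \<and> (\<exists>k\<in>S. x < k \<and> k < y) \<and> (\<exists>k\<in>S. k < x \<or> y < k)"
  by (simp add: diagonals_def)

lemma diagonalsI:
  assumes "x \<in> S" "y \<in> S" "k \<in> S" "x < k" "k < y" "k' \<in> S" "k' < x \<or> y < k'"
  shows "(x, y) \<in> diagonals S"
  using assms by (auto simp: mem_diagonals_iff)

lemma diagonals_mono: "S \<subseteq> S' \<Longrightarrow> diagonals S \<subseteq> diagonals S'"
  unfolding diagonals_def by blast

lemma finite_diagonals: "finite S \<Longrightarrow> finite (diagonals S)"
  by (rule finite_subset[of _ "S \<times> S"]) (auto simp: diagonals_def)

lemma noncrossing_insert:
  "noncrossing (insert f T) \<longleftrightarrow> noncrossing T \<and> (\<forall>e\<in>T. \<not> edge_cross e f)"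
  unfolding noncrossing_def edge_cross_def by auto

lemma noncrossing_Un:
  "noncrossing (A \<union> B) \<longleftrightarrow> noncrossing A \<and> noncrossing B \<and>
     (\<forall>e\<in>A. \<forall>f\<in>B. \<not> edge_cross e f \<and> \<not> edge_cross f e)"
  unfolding noncrossing_def by blast

lemma triangulation_iff_maximal:
  "triangulation S T \<longleftrightarrow> T \<subseteq> diagonals S \<and> noncrossing T \<and>
     (\<forall>f\<in>diagonals S. (\<forall>e\<in>T. \<not> edge_cross e f) \<longrightarrow> f \<in> T)"
proof
  assume T: "triangulation S T"
  have "f \<in> T" if "f \<in> diagonals S" "\<forall>e\<in>T. \<not> edge_cross e f" for f
  proof -
    have "noncrossing (insert f T)" "insert f T \<subseteq> diagonals S"
      using T that by (auto simp: triangulation_def noncrossing_insert)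
    then show ?thesis using T unfolding triangulation_def by blast
  qed
  then show "T \<subseteq> diagonals S \<and> noncrossing T \<and>
      (\<forall>f\<in>diagonals S. (\<forall>e\<in>T. \<not> edge_cross e f) \<longrightarrow> f \<in> T)"
    using T unfolding triangulation_def by blast
next
  assume maximal: "T \<subseteq> diagonals S \<and> noncrossing T \<and>
      (\<forall>f\<in>diagonals S. (\<forall>e\<in>T. \<not> edge_cross e f) \<longrightarrow> f \<in> T)"
  have "T' \<subseteq> T" if "T \<subseteq> T'" "T' \<subseteq> diagonals S" "noncrossing T'" for T'
    using maximal that unfolding noncrossing_def by blast
  then show "triangulation S T" using maximal unfolding triangulation_def by blast
qed

lemma triangulation_subset_diagonals: "triangulation S T \<Longrightarrow> T \<subseteq> diagonals S"
  by (simp add: triangulation_def)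

definition fan :: "nat set \<Rightarrow> nat \<Rightarrow> (nat \<times> nat) set" where
  "fan S v = {e \<in> diagonals S. fst e = v \<or> snd e = v}"

lemma triangulation_fan:
  assumes v: "v \<in> S"
  shows "triangulation S (fan S v)"
  unfolding triangulation_iff_maximal
proof (intro conjI ballI impI)
  show "fan S v \<subseteq> diagonals S" "noncrossing (fan S v)"
    by (auto simp: fan_def noncrossing_def edge_cross_def diagonals_def)
next
  fix f assume f: "f \<in> diagonals S" and uncrossed: "\<forall>e\<in>fan S v. \<not> edge_cross e f"
  obtain x y where f_eq: "f = (x, y)" by (cases f)
  show "f \<in> fan S v"
  proof (rule ccontr)
    assume "f \<notin> fan S v"
    then have "x \<noteq> v" "y \<noteq> v" using f f_eq by (auto simp: fan_def)
    obtain k k' where k: "k \<in> S" "x < k" "k < y" and k': "k' \<in> S" "k' < x \<or> y < k'"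
      using f f_eq by (auto simp: mem_diagonals_iff)
    \<comment> \<open>z lies on the other side of f than v, so the fan edge joining v and z crosses f\<close>
    define z where "z = (if x < v \<and> v < y then k' else k)"
    have "z \<in> S" using k k' z_def by auto
    have xy: "x \<in> S" "y \<in> S" using f f_eq by (auto simp: mem_diagonals_iff)
    have separated: "min v z < x \<and> x < max v z \<and> (y < min v z \<or> max v z < y) \<or>
        min v z < y \<and> y < max v z \<and> (x < min v z \<or> max v z < x)"
      using k k' \<open>x \<noteq> v\<close> \<open>y \<noteq> v\<close> by (auto simp: z_def min_def max_def)
    have "(min v z, max v z) \<in> diagonals S"
      using separated xy v \<open>z \<in> S\<close> by (elim disjE) (auto intro: diagonalsI simp: min_def max_def)
    then have "(min v z, max v z) \<in> fan S v" by (simp add: fan_def min_def max_def)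
    moreover have "edge_cross (min v z, max v z) f"
      using separated f_eq k by (auto simp: edge_cross_Pair min_def max_def)
    ultimately show False using uncrossed by blast
  qed
qed

lemma edge_cross_inside_outside:
  assumes "p \<le> x" "y \<le> q" "u \<notin> {p<..<q}" "w \<notin> {p<..<q}"
  shows "\<not> edge_cross (x, y) (u, w)" "\<not> edge_cross (u, w) (x, y)"
  using assms by (auto simp: edge_cross_Pair)

lemma noncrossing_inner_outer:
  assumes "e \<in> insert (p, q) (diagonals (S \<inter> {p..q}))"
    and "f \<in> insert (p, q) (diagonals (S - {p<..<q}))"
  shows "\<not> edge_cross e f \<and> \<not> edge_cross f e"
proof -
  obtain x y u w where "e = (x, y)" "f = (u, w)" by (cases e, cases f)
  moreover have "p \<le> x" "y \<le> q" "u \<notin> {p<..<q}" "w \<notin> {p<..<q}"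
    using assms calculation by (auto simp: mem_diagonals_iff)
  ultimately show ?thesis using edge_cross_inside_outside by blast
qed

lemma diagonals_split:
  assumes xy: "(x, y) \<in> diagonals S" and pq: "(p, q) \<in> diagonals S"
    and "\<not> edge_cross (x, y) (p, q)" "(x, y) \<noteq> (p, q)"
  shows "(x, y) \<in> diagonals (S \<inter> {p..q}) \<or> (x, y) \<in> diagonals (S - {p<..<q})"
proof -
  obtain k k' where k: "k \<in> S" "x < k" "k < y" and k': "k' \<in> S" "k' < x \<or> y < k'"
    using xy by (auto simp: mem_diagonals_iff)
  have S: "x \<in> S" "y \<in> S" "p \<in> S" "q \<in> S" "x < y" "p < q"
    using xy pq by (auto simp: mem_diagonals_iff)
  have "p \<le> x \<and> y \<le> q \<or> x \<notin> {p<..<q} \<and> y \<notin> {p<..<q}"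
    using assms(3) S by (auto simp: edge_cross_Pair)
  then consider "p \<le> x" "y \<le> q" | "x \<notin> {p<..<q}" "y \<notin> {p<..<q}" by blast
  then show ?thesis
  proof cases
    case 1
    have "(x, y) \<in> diagonals (S \<inter> {p..q})"
      by (rule diagonalsI[of _ _ _ k "if p < x then p else q"]) (use 1 assms(4) S k in auto)
    then show ?thesis ..
  next
    case 2
    have "(x, y) \<in> diagonals (S - {p<..<q})"
    proof (rule diagonalsI[of _ _ _ "if k \<in> {p<..<q} then (if x < p then p else q) else k"
          "if k' \<in> {p<..<q} then (if k' < x then p else q) else k'"])
    qed (use 2 assms(4) S k k' in auto)
    then show ?thesis ..
  qed
qed

lemma triangulation_glue:
  assumes pq: "(p, q) \<in> diagonals S"
    and T1: "triangulation (S \<inter> {p..q}) T1" and T2: "triangulation (S - {p<..<q}) T2"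
  shows "triangulation S (insert (p, q) (T1 \<union> T2))"
  unfolding triangulation_iff_maximal
proof (intro conjI ballI impI)
  have D1: "T1 \<subseteq> diagonals (S \<inter> {p..q})" and D2: "T2 \<subseteq> diagonals (S - {p<..<q})"
    and N1: "noncrossing T1" and N2: "noncrossing T2"
    using T1 T2 by (auto simp: triangulation_def)
  show "insert (p, q) (T1 \<union> T2) \<subseteq> diagonals S"
    using pq D1 D2 diagonals_mono[of "S \<inter> {p..q}" S] diagonals_mono[of "S - {p<..<q}" S] by blast
  have cross_free: "\<not> edge_cross e f \<and> \<not> edge_cross f e"
    if "e \<in> insert (p, q) T1" "f \<in> insert (p, q) T2" for e f
    using that D1 D2 noncrossing_inner_outer[of e p q S f] by blast
  have "noncrossing (insert (p, q) T1)" "noncrossing (insert (p, q) T2)"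
    using N1 N2 cross_free[of _ "(p, q)"] cross_free[of "(p, q)"] unfolding noncrossing_insert by blast+
  then have "noncrossing (insert (p, q) T1 \<union> insert (p, q) T2)"
    unfolding noncrossing_Un using cross_free by blast
  then show "noncrossing (insert (p, q) (T1 \<union> T2))" by simp
next
  fix f assume f: "f \<in> diagonals S" and uncrossed: "\<forall>e\<in>insert (p, q) (T1 \<union> T2). \<not> edge_cross e f"
  have M1: "f \<in> T1" if "f \<in> diagonals (S \<inter> {p..q})"
    using T1 that uncrossed by (auto simp: triangulation_iff_maximal)
  have M2: "f \<in> T2" if "f \<in> diagonals (S - {p<..<q})"
    using T2 that uncrossed by (auto simp: triangulation_iff_maximal)
  show "f \<in> insert (p, q) (T1 \<union> T2)"
    using diagonals_split[of "fst f" "snd f" S p q] f pq uncrossed M1 M2 edge_cross_commute by auto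
qed

lemma triangulation_restrict:
  assumes T: "triangulation S T" and "S' \<subseteq> S"
    and "\<And>e f. e \<in> T \<Longrightarrow> e \<notin> diagonals S' \<Longrightarrow> f \<in> diagonals S' \<Longrightarrow> \<not> edge_cross e f"
  shows "triangulation S' (T \<inter> diagonals S')"
  unfolding triangulation_iff_maximal
proof (intro conjI ballI impI)
  show "noncrossing (T \<inter> diagonals S')" using T by (auto simp: triangulation_def noncrossing_def)
  fix f assume f: "f \<in> diagonals S'" and "\<forall>e\<in>T \<inter> diagonals S'. \<not> edge_cross e f"
  then have "\<forall>e\<in>T. \<not> edge_cross e f" using assms(3) by blast
  then show "f \<in> T \<inter> diagonals S'"
    using T f diagonals_mono[OF \<open>S' \<subseteq> S\<close>] by (auto simp: triangulation_iff_maximal)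
qed auto

lemma
  assumes T: "triangulation S T" and pq: "(p, q) \<in> T"
  shows triangulation_restrict_inner: "triangulation (S \<inter> {p..q}) (T \<inter> diagonals (S \<inter> {p..q}))"
    and triangulation_restrict_outer: "triangulation (S - {p<..<q}) (T \<inter> diagonals (S - {p<..<q}))"
proof -
  have sides: "e \<in> insert (p, q) (diagonals (S \<inter> {p..q})) \<union> insert (p, q) (diagonals (S - {p<..<q}))"
    if "e \<in> T" for e
    using diagonals_split[of "fst e" "snd e" S p q] that T pq
    by (auto simp: triangulation_def noncrossing_def)
  show "triangulation (S \<inter> {p..q}) (T \<inter> diagonals (S \<inter> {p..q}))"
    by (rule triangulation_restrict[OF T]) (use sides noncrossing_inner_outer in blast)+
  show "triangulation (S - {p<..<q}) (T \<inter> diagonals (S - {p<..<q}))"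
    by (rule triangulation_restrict[OF T]) (use sides noncrossing_inner_outer in blast)+
qed

lemma triangulation_two_fans_avoiding:
  assumes pq: "(p, q) \<in> diagonals S"
    and u: "u \<in> S" "p \<le> u" "u \<le> q" and v: "v \<in> S" "v \<notin> {p<..<q}"
    and inner_avoids: "\<And>x y. \<lbrakk>x \<in> S; y \<in> S; p \<le> x; y \<le> q; x < y; x = u \<or> y = u\<rbrakk> \<Longrightarrow> (x, y) \<notin> X"
    and outer_avoids: "\<And>x y. \<lbrakk>x \<in> S; y \<in> S; x \<notin> {p<..<q}; y \<notin> {p<..<q}; x < y; x = v \<or> y = v\<rbrakk>
      \<Longrightarrow> (x, y) \<notin> X"
  shows "\<exists>T. triangulation S T \<and> T \<inter> X \<subseteq> {(p, q)}"
proof (intro exI conjI)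
  let ?T = "insert (p, q) (fan (S \<inter> {p..q}) u \<union> fan (S - {p<..<q}) v)"
  show "triangulation S ?T"
    using u v by (intro triangulation_glue pq triangulation_fan) auto
  show "?T \<inter> X \<subseteq> {(p, q)}"
    using inner_avoids outer_avoids by (auto simp: fan_def mem_diagonals_iff)
qed

lemma triangulation_glue_polygon:
  assumes "(p, q) \<in> diagonals {0..<n}"
    and "triangulation {p..q} T1" "triangulation ({0..p} \<union> {q..<n}) T2"
  shows "triangulation {0..<n} (insert (p, q) (T1 \<union> T2))"
proof -
  have "p < q" "q < n" using assms(1) by (auto simp: mem_diagonals_iff)
  then have "{0..<n} \<inter> {p..q} = {p..q}" "{0..<n} - {p<..<q} = {0..p} \<union> {q..<n}" by auto
  then show ?thesis using triangulation_glue[of p q "{0..<n}" T1 T2] assms by simp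
qed

lemma
  assumes "triangulation {0..<n} T" "(p, q) \<in> T"
  shows triangulation_restrict_polygon_inner: "triangulation {p..q} (T \<inter> diagonals {p..q})"
    and triangulation_restrict_polygon_outer:
      "triangulation ({0..p} \<union> {q..<n}) (T \<inter> diagonals ({0..p} \<union> {q..<n}))"
proof -
  have "(p, q) \<in> diagonals {0..<n}" using assms triangulation_subset_diagonals by blast
  then have "p < q" "q < n" by (auto simp: mem_diagonals_iff)
  then have "{0..<n} \<inter> {p..q} = {p..q}" "{0..<n} - {p<..<q} = {0..p} \<union> {q..<n}" by auto
  then show "triangulation {p..q} (T \<inter> diagonals {p..q})"
    and "triangulation ({0..p} \<union> {q..<n}) (T \<inter> diagonals ({0..p} \<union> {q..<n}))"
    using triangulation_restrict_inner[OF assms] triangulation_restrict_outer[OF assms] by simp_all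
qed

definition boundary_edges :: "nat \<Rightarrow> (nat \<times> nat) set" where
  "boundary_edges n = {(i, Suc i) | i. Suc i < n} \<union> {(0, n - 1)}"

lemma mem_boundary_edges_iff:
  "(x, y) \<in> boundary_edges n \<longleftrightarrow> y = Suc x \<and> Suc x < n \<or> x = 0 \<and> y = n - 1"
  by (auto simp: boundary_edges_def)

lemma triangulation_edge_bounds:
  assumes "triangulation {0..<n} T" "(x, y) \<in> T \<union> boundary_edges n" "x < y"
  shows "y < n"
proof -
  have "T \<subseteq> diagonals {0..<n}" using assms(1) by (rule triangulation_subset_diagonals)
  then show ?thesis using assms(2,3) by (auto simp: mem_boundary_edges_iff mem_diagonals_iff)
qed

lemma boundary_edge_uncrossed:
  assumes "e \<in> boundary_edges n" "fst f \<le> n - 1" "snd f \<le> n - 1"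
  shows "\<not> edge_cross e f \<and> \<not> edge_cross f e"
  using assms by (cases e, cases f) (auto simp: mem_boundary_edges_iff edge_cross_Pair)

lemma noncrossing_with_boundary:
  assumes "triangulation {0..<n} T"
  shows "noncrossing (T \<union> boundary_edges n)"
proof -
  have "T \<subseteq> diagonals {0..<n}" using assms by (rule triangulation_subset_diagonals)
  have "noncrossing T" using assms by (simp add: triangulation_def)
  have bounded: "fst f \<le> n - 1 \<and> snd f \<le> n - 1" if "f \<in> T \<union> boundary_edges n" for f
  proof (cases f)
    case (Pair x y)
    then have "(x, y) \<in> diagonals {0..<n} \<or> (x, y) \<in> boundary_edges n"
      using that \<open>T \<subseteq> diagonals {0..<n}\<close> by blast
    then show ?thesis using Pair by (auto simp: mem_boundary_edges_iff mem_diagonals_iff)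
  qed
  have "noncrossing (boundary_edges n)"
    using boundary_edge_uncrossed bounded unfolding noncrossing_def by blast
  moreover have "\<forall>e\<in>T. \<forall>f\<in>boundary_edges n. \<not> edge_cross e f \<and> \<not> edge_cross f e"
    using boundary_edge_uncrossed bounded by blast
  ultimately show ?thesis using \<open>noncrossing T\<close> unfolding noncrossing_Un by blast
qed

lemma triangulation_apex:
  assumes T: "triangulation {0..<n} T"
    and ij: "(i, j) \<in> T \<union> boundary_edges n" "i + 2 \<le> j"
  shows "\<exists>k. i < k \<and> k < j \<and> (i, k) \<in> T \<union> boundary_edges n \<and> (k, j) \<in> T \<union> boundary_edges n"
proof -
  let ?E = "T \<union> boundary_edges n"
  have "j < n" using triangulation_edge_bounds[OF T ij(1)] ij(2) by simp
  define K where "K = {k. i < k \<and> k < j \<and> (i, k) \<in> ?E}"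
  have "Suc i \<in> K" using ij \<open>j < n\<close> by (auto simp: K_def mem_boundary_edges_iff)
  moreover have "finite K" unfolding K_def by (rule finite_subset[of _ "{..<j}"]) auto
  ultimately have k: "Max K \<in> K" and k_max: "\<And>k'. k' \<in> K \<Longrightarrow> k' \<le> Max K"
    using Max_in Max_ge by blast+
  define k where "k = Max K"
  have "(k, j) \<in> ?E"
  proof (cases "Suc k = j")
    case True
    then show ?thesis using \<open>j < n\<close> by (auto simp: mem_boundary_edges_iff)
  next
    case False
    have ik: "i < k" "k < j" "(i, k) \<in> ?E" using k by (auto simp: k_def K_def)
    have diagonal: "(k, j) \<in> diagonals {0..<n}"
      by (rule diagonalsI[of _ _ _ "Suc k" i]) (use False ik \<open>j < n\<close> in auto)
    have "\<not> edge_cross g (k, j)" if g: "g \<in> T" for g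
    proof
      assume crosses: "edge_cross g (k, j)"
      obtain u w where g_eq: "g = (u, w)" by (cases g)
      have "\<not> edge_cross g (i, j)" "\<not> edge_cross g (i, k)"
        using noncrossing_with_boundary[OF T] g ij(1) ik(3) unfolding noncrossing_def by blast+
      moreover have "u \<noteq> i \<or> \<not> (k < w \<and> w < j)"
      proof (rule ccontr)
        assume "\<not> (u \<noteq> i \<or> \<not> (k < w \<and> w < j))"
        then have "w \<in> K" using g g_eq ik by (auto simp: K_def)
        then show False using k_max[of w] k_def \<open>\<not> (u \<noteq> i \<or> \<not> (k < w \<and> w < j))\<close> by simp
      qed
      ultimately show False using crosses g_eq ik by (auto simp: edge_cross_Pair)
    qed
    then show ?thesis using T diagonal by (auto simp: triangulation_iff_maximal)
  qed
  then show ?thesis using k by (auto simp: k_def K_def)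
qed

lemma triangulation_has_opposite_edge:
  assumes T: "triangulation {0..<n} T" and "0 < a" "a < b" "b < c" "c < n"
  shows "\<exists>(x, y)\<in>T. x < a \<and> b \<le> y \<and> y < c \<or> a \<le> x \<and> x < b \<and> c \<le> y"
proof (rule ccontr)
  assume no_opposite: "\<not> ?thesis"
  let ?E = "T \<union> boundary_edges n"
  have in_T: "(x, y) \<in> T" if "(x, y) \<in> ?E" "x + 2 \<le> y" "0 < x \<or> y < n - 1" for x y
    using that by (auto simp: mem_boundary_edges_iff)
  define P where "P = (\<lambda>(i, j). (i, j) \<in> ?E \<and> i < a \<and> b \<le> j)"
  have "P (0, n - 1)" using assms by (auto simp: P_def mem_boundary_edges_iff)
  then obtain i j where P_ij: "P (i, j)" and shortest: "\<And>i' j'. P (i', j') \<Longrightarrow> j - i \<le> j' - i'"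
    using ex_has_least_nat[where P = P and m = "\<lambda>(i, j). j - i"] by fastforce
  have ij: "(i, j) \<in> ?E" "i < a" "b \<le> j" "i + 2 \<le> j" using P_ij assms by (auto simp: P_def)
  have "j < n" using triangulation_edge_bounds[OF T ij(1)] ij by simp
  show False
  proof (cases "j < c")
    case True
    then have "j < n - 1" using assms by linarith
    then have "(i, j) \<in> T" using in_T[OF ij(1,4)] by simp
    then show False using no_opposite True ij by auto
  next
    case False
    obtain k where k: "i < k" "k < j" "(i, k) \<in> ?E" "(k, j) \<in> ?E"
      using triangulation_apex[OF T ij(1,4)] by blast
    consider "k < a" | "a \<le> k" "k < b" | "b \<le> k" "k < c" | "c \<le> k" by linarith
    then show False
    proof cases
      case 1
      then show False using shortest[of k j] k ij by (auto simp: P_def)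
    next
      case 2
      then show False using no_opposite in_T[OF k(4)] False k ij assms \<open>j < n\<close> by auto
    next
      case 3
      then have "k < n - 1" "i + 2 \<le> k" using assms ij by linarith+
      then have "(i, k) \<in> T" using in_T[OF k(3)] by simp
      then show False using no_opposite 3 ij by auto
    next
      case 4
      then show False using shortest[of i k] k ij assms by (auto simp: P_def)
    qed
  qed
qed

lemma saturated_blocker_iff:
  "saturated_blocker S B \<longleftrightarrow> blocker S B \<and> (\<forall>e\<in>B. \<exists>T. triangulation S T \<and> T \<inter> B \<subseteq> {e})"
  unfolding saturated_blocker_def blocker_def by blast

locale merged_blocker =
  fixes n a b c :: nat and B_T B_B :: "(nat \<times> nat) set"
  assumes sizes: "3 \<le> a" "a + 2 \<le> b" "b + 3 \<le> c" "c + 2 \<le> n"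
    and saturated_T: "saturated_blocker ({c..<n} \<union> {0, c - 1}) B_T"
    and saturated_B: "saturated_blocker ({a..<b} \<union> {a - 1, b}) B_B"
begin

definition B_Q :: "(nat \<times> nat) set" where
  "B_Q = {(r, l). r \<in> {0..<a} \<and> l \<in> {b..<c}} \<union> {(x, t). x \<in> {a..<b} \<and> t \<in> {c..<n}}"

definition B_M :: "(nat \<times> nat) set" where
  "B_M = (B_Q - {(0, c - 1), (a - 1, b)}) \<union> B_T \<union> B_B"

lemma saturated_top: "saturated_blocker ({0..0} \<union> {c - 1..<n}) B_T"
proof -
  have "{c..<n} \<union> {0, c - 1} = {0..0} \<union> {c - 1..<n}" using sizes by auto
  then show ?thesis using saturated_T by metis
qed

lemma saturated_bottom: "saturated_blocker {a - 1..b} B_B"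
proof -
  have "{a..<b} \<union> {a - 1, b} = {a - 1..b}" using sizes by auto
  then show ?thesis using saturated_B by metis
qed

lemma B_T_shape:
  assumes "(x, y) \<in> B_T"
  shows "x < y \<and> c \<le> y \<and> y < n \<and> (x = 0 \<and> y < n - 1 \<or> c - 1 \<le> x \<and> x + 2 \<le> y)"
proof -
  have "(x, y) \<in> diagonals ({0..0} \<union> {c - 1..<n})"
    using assms saturated_top by (auto simp: saturated_blocker_def blocker_def)
  then obtain k k' where "x \<in> {0..0} \<union> {c - 1..<n}" "y \<in> {0..0} \<union> {c - 1..<n}" "x < y"
    "k \<in> {0..0} \<union> {c - 1..<n}" "x < k" "k < y" "k' \<in> {0..0} \<union> {c - 1..<n}" "k' < x \<or> y < k'"
    unfolding mem_diagonals_iff by blast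
  then show ?thesis using sizes by auto
qed

lemma B_B_shape:
  assumes "(x, y) \<in> B_B"
  shows "a - 1 \<le> x \<and> y \<le> b \<and> x + 2 \<le> y \<and> (x, y) \<noteq> (a - 1, b)"
proof -
  have "(x, y) \<in> diagonals {a - 1..b}"
    using assms saturated_bottom by (auto simp: saturated_blocker_def blocker_def)
  then obtain k k' where "x \<in> {a - 1..b}" "y \<in> {a - 1..b}" "x < y"
    "k \<in> {a - 1..b}" "x < k" "k < y" "k' \<in> {a - 1..b}" "k' < x \<or> y < k'"
    unfolding mem_diagonals_iff by blast
  then show ?thesis by auto
qed

lemma B_M_subset_diagonals: "B_M \<subseteq> diagonals {0..<n}"
proof
  fix e assume "e \<in> B_M"
  obtain x y where e: "e = (x, y)" by (cases e)
  consider "(x, y) \<in> B_Q" | "(x, y) \<in> B_T" | "(x, y) \<in> B_B" using \<open>e \<in> B_M\<close> e by (auto simp: B_M_def)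
  then show "e \<in> diagonals {0..<n}"
  proof cases
    case 1
    then show ?thesis
      using sizes e by (auto simp: B_Q_def intro: diagonalsI[where k = a and k' = "n - 1"]
          diagonalsI[where k = b and k' = 0])
  next
    case 2
    then show ?thesis using B_T_shape[OF 2] sizes e
      by (auto intro!: diagonalsI[where k = "x + 1" and k' = "if x = 0 then n - 1 else 0"])
  next
    case 3
    then show ?thesis using B_B_shape[OF 3] sizes e
      by (auto intro!: diagonalsI[where k = "x + 1" and k' = "n - 1"])
  qed
qed

lemma B_M_shape:
  assumes "(x, y) \<in> B_M"
  shows "x < a \<and> b \<le> y \<and> y < c \<and> (x, y) \<noteq> (0, c - 1) \<and> (x, y) \<noteq> (a - 1, b) \<or>
    a \<le> x \<and> x < b \<and> c \<le> y \<and> y < n \<or>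
    x < y \<and> c \<le> y \<and> y < n \<and> (x = 0 \<and> y < n - 1 \<or> c - 1 \<le> x \<and> x + 2 \<le> y) \<or>
    a - 1 \<le> x \<and> y \<le> b \<and> x + 2 \<le> y \<and> (x, y) \<noteq> (a - 1, b)"
  using assms B_T_shape[of x y] B_B_shape[of x y] by (auto simp: B_M_def B_Q_def)

lemma B_M_inter_top: "B_M \<inter> diagonals ({0..0} \<union> {c - 1..<n}) \<subseteq> B_T"
proof
  fix e assume e: "e \<in> B_M \<inter> diagonals ({0..0} \<union> {c - 1..<n})"
  obtain x y where [simp]: "e = (x, y)" by (cases e)
  have "x = 0 \<or> c - 1 \<le> x" "c - 1 \<le> y" "x < y" using e by (auto simp: mem_diagonals_iff)
  then show "e \<in> B_T" using e B_B_shape[of x y] sizes by (auto simp: B_M_def B_Q_def)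
qed

lemma B_M_inter_bottom: "B_M \<inter> diagonals {a - 1..b} \<subseteq> B_B"
proof
  fix e assume e: "e \<in> B_M \<inter> diagonals {a - 1..b}"
  obtain x y where [simp]: "e = (x, y)" by (cases e)
  have "a - 1 \<le> x" "y \<le> b" "x < y" using e by (auto simp: mem_diagonals_iff)
  then show "e \<in> B_B" using e B_T_shape[of x y] sizes by (auto simp: B_M_def B_Q_def)
qed

lemma blocker_B_M: "blocker {0..<n} B_M"
  unfolding blocker_def
proof (intro conjI allI impI)
  show "B_M \<subseteq> diagonals {0..<n}" by (rule B_M_subset_diagonals)
  fix T assume T: "triangulation {0..<n} T"
  obtain x y where xy: "(x, y) \<in> T" and opposite: "x < a \<and> b \<le> y \<and> y < c \<or> a \<le> x \<and> x < b \<and> c \<le> y"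
    using triangulation_has_opposite_edge[OF T, of a b c] sizes by auto
  have "y < n" using xy T triangulation_subset_diagonals by (fastforce simp: mem_diagonals_iff)
  then have "(x, y) \<in> B_Q" using opposite by (auto simp: B_Q_def)
  then consider "(x, y) = (0, c - 1)" | "(x, y) = (a - 1, b)" | "(x, y) \<in> B_M"
    unfolding B_M_def by blast
  then show "B_M \<inter> T \<noteq> {}"
  proof cases
    case 1
    then have "triangulation ({0..0} \<union> {c - 1..<n}) (T \<inter> diagonals ({0..0} \<union> {c - 1..<n}))"
      using triangulation_restrict_polygon_outer[OF T xy] by simp
    then have "B_T \<inter> T \<noteq> {}" using saturated_top by (auto simp: saturated_blocker_def blocker_def)
    then show ?thesis by (auto simp: B_M_def)
  next
    case 2
    then have "triangulation {a - 1..b} (T \<inter> diagonals {a - 1..b})"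
      using triangulation_restrict_polygon_inner[OF T xy] by simp
    then have "B_B \<inter> T \<noteq> {}" using saturated_bottom by (auto simp: saturated_blocker_def blocker_def)
    then show ?thesis by (auto simp: B_M_def)
  next
    case 3
    then show ?thesis using xy by blast
  qed
qed

lemma inner_triangulation_avoiding_B_M:
  assumes "r < a" "b \<le> l" "l < c" "(r, l) \<noteq> (a - 1, b)"
  shows "\<exists>T. triangulation {r..l} T \<and> T \<inter> B_M = {}"
proof (cases "r + 2 \<le> a")
  case True
  have "\<exists>T. triangulation {r..l} T \<and> T \<inter> B_M \<subseteq> {(a - 2, b - 1)}"
    by (rule triangulation_two_fans_avoiding[where u = "a - 2" and v = "b - 1"])
      (use assms True sizes in \<open>auto dest!: B_M_shape intro!: diagonalsI[where k = "a - 1" and k' = l]\<close>)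
  moreover have "(a - 2, b - 1) \<notin> B_M" using sizes by (auto dest!: B_M_shape)
  ultimately show ?thesis by blast
next
  case False
  then have "r = a - 1" "b + 1 \<le> l" using assms by auto
  have "\<exists>T. triangulation {r..l} T \<and> T \<inter> B_M \<subseteq> {(a, b + 1)}"
    by (rule triangulation_two_fans_avoiding[where u = "b + 1" and v = a])
      (use assms \<open>r = a - 1\<close> \<open>b + 1 \<le> l\<close> sizes in
        \<open>auto dest!: B_M_shape intro!: diagonalsI[where k = "a + 1" and k' = r]\<close>)
  moreover have "(a, b + 1) \<notin> B_M" using sizes by (auto dest!: B_M_shape)
  ultimately show ?thesis by blast
qed

lemma outer_triangulation_avoiding_B_M:
  assumes "r < a" "b \<le> l" "l < c" "(r, l) \<noteq> (0, c - 1)"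
  shows "\<exists>T. triangulation ({0..r} \<union> {l..<n}) T \<and> T \<inter> B_M = {}"
proof (cases "1 \<le> r")
  case True
  have "\<exists>T. triangulation ({0..r} \<union> {l..<n}) T \<and> T \<inter> B_M \<subseteq> {(1, c)}"
    by (rule triangulation_two_fans_avoiding[where u = c and v = 1])
      (use assms True sizes in \<open>auto dest!: B_M_shape intro!: diagonalsI[where k = l and k' = 0]\<close>)
  moreover have "(1, c) \<notin> B_M" using sizes by (auto dest!: B_M_shape)
  ultimately show ?thesis by blast
next
  case False
  then have "r = 0" "l + 2 \<le> c" using assms by auto
  have "\<exists>T. triangulation ({0..r} \<union> {l..<n}) T \<and> T \<inter> B_M \<subseteq> {(c - 2, n - 1)}"
    by (rule triangulation_two_fans_avoiding[where u = "c - 2" and v = "n - 1"])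
      (use assms \<open>r = 0\<close> \<open>l + 2 \<le> c\<close> sizes in
        \<open>auto dest!: B_M_shape intro!: diagonalsI[where k = "c - 1" and k' = 0]\<close>)
  moreover have "(c - 2, n - 1) \<notin> B_M" using sizes by (auto dest!: B_M_shape)
  ultimately show ?thesis by blast
qed

lemma isolating_triangulation_left_right:
  assumes "r < a" "b \<le> l" "l < c" "(r, l) \<noteq> (0, c - 1)" "(r, l) \<noteq> (a - 1, b)"
  shows "\<exists>T. triangulation {0..<n} T \<and> T \<inter> B_M \<subseteq> {(r, l)}"
proof -
  obtain T1 where T1: "triangulation {r..l} T1" "T1 \<inter> B_M = {}"
    using inner_triangulation_avoiding_B_M assms by blast
  obtain T2 where T2: "triangulation ({0..r} \<union> {l..<n}) T2" "T2 \<inter> B_M = {}"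
    using outer_triangulation_avoiding_B_M assms by blast
  have "(r, l) \<in> diagonals {0..<n}"
    by (rule diagonalsI[where k = a and k' = "n - 1"]) (use assms sizes in auto)
  then have "triangulation {0..<n} (insert (r, l) (T1 \<union> T2))"
    using T1(1) T2(1) by (rule triangulation_glue_polygon)
  then show ?thesis using T1(2) T2(2) by blast
qed

lemma isolating_triangulation_bottom_top:
  assumes "a \<le> x" "x < b" "c \<le> t" "t < n"
  shows "\<exists>T. triangulation {0..<n} T \<and> T \<inter> B_M \<subseteq> {(x, t)}"
  by (rule triangulation_two_fans_avoiding[where u = "b + 1" and v = 1])
    (use assms sizes in \<open>auto dest!: B_M_shape intro!: diagonalsI[where k = b and k' = 0]\<close>)

lemma isolating_triangulation_top:
  assumes "e \<in> B_T"
  shows "\<exists>T. triangulation {0..<n} T \<and> T \<inter> B_M \<subseteq> {e}"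
proof -
  obtain T' where T': "triangulation ({0..0} \<union> {c - 1..<n}) T'" "T' \<inter> B_T \<subseteq> {e}"
    using saturated_top assms by (auto simp: saturated_blocker_iff)
  obtain T1 where T1: "triangulation {0..c - 1} T1" "T1 \<inter> B_M = {}"
    using inner_triangulation_avoiding_B_M[of 0 "c - 1"] sizes by (auto simp: le_diff_conv2)
  have "(0, c - 1) \<in> diagonals {0..<n}"
    by (rule diagonalsI[where k = 1 and k' = "n - 1"]) (use sizes in auto)
  then have "triangulation {0..<n} (insert (0, c - 1) (T1 \<union> T'))"
    using T1(1) T'(1) by (rule triangulation_glue_polygon)
  moreover have "(0, c - 1) \<notin> B_M" using sizes by (auto dest!: B_M_shape)
  moreover have "T' \<inter> B_M \<subseteq> {e}"
    using T' B_M_inter_top triangulation_subset_diagonals by blast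
  ultimately show ?thesis using T1(2) by blast
qed

lemma isolating_triangulation_bottom:
  assumes "e \<in> B_B"
  shows "\<exists>T. triangulation {0..<n} T \<and> T \<inter> B_M \<subseteq> {e}"
proof -
  obtain T' where T': "triangulation {a - 1..b} T'" "T' \<inter> B_B \<subseteq> {e}"
    using saturated_bottom assms by (auto simp: saturated_blocker_iff)
  obtain T2 where T2: "triangulation ({0..a - 1} \<union> {b..<n}) T2" "T2 \<inter> B_M = {}"
    using outer_triangulation_avoiding_B_M[of "a - 1" b] sizes by auto
  have "(a - 1, b) \<in> diagonals {0..<n}"
    by (rule diagonalsI[where k = a and k' = 0]) (use sizes in auto)
  then have "triangulation {0..<n} (insert (a - 1, b) (T' \<union> T2))"
    using T'(1) T2(1) by (rule triangulation_glue_polygon)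
  moreover have "(a - 1, b) \<notin> B_M" using sizes by (auto dest!: B_M_shape)
  moreover have "T' \<inter> B_M \<subseteq> {e}"
    using T' B_M_inter_bottom triangulation_subset_diagonals by blast
  ultimately show ?thesis using T2(2) by blast
qed

lemma saturated_B_M: "saturated_blocker {0..<n} B_M"
  unfolding saturated_blocker_iff
proof (intro conjI ballI)
  show "blocker {0..<n} B_M" by (rule blocker_B_M)
  fix e assume "e \<in> B_M"
  obtain x y where e: "e = (x, y)" by (cases e)
  have "e \<in> B_T \<or> e \<in> B_B \<or>
      x < a \<and> b \<le> y \<and> y < c \<and> (x, y) \<noteq> (0, c - 1) \<and> (x, y) \<noteq> (a - 1, b) \<or>
      a \<le> x \<and> x < b \<and> c \<le> y \<and> y < n"
    using \<open>e \<in> B_M\<close> e by (auto simp: B_M_def B_Q_def)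
  then show "\<exists>T. triangulation {0..<n} T \<and> T \<inter> B_M \<subseteq> {e}"
    using e isolating_triangulation_top isolating_triangulation_bottom
      isolating_triangulation_left_right[of x y] isolating_triangulation_bottom_top[of x y] by blast
qed

lemma card_B_M: "card B_M = (n - c) * (b - a) + (c - b) * a + card B_T + card B_B - 2"
proof -
  have "finite B_T" "finite B_B"
    using saturated_top saturated_bottom finite_diagonals finite_subset
    by (auto simp: saturated_blocker_def blocker_def)
  have "B_Q = {0..<a} \<times> {b..<c} \<union> {a..<b} \<times> {c..<n}" by (auto simp: B_Q_def)
  then have "finite B_Q" and card_B_Q: "card B_Q = (n - c) * (b - a) + (c - b) * a"
    by (auto simp: card_cartesian_product intro!: card_Un_disjoint[THEN trans])
  have removed: "{(0, c - 1), (a - 1, b)} \<subseteq> B_Q" "card {(0, c - 1), (a - 1, b)} = 2"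
    using sizes by (auto simp: B_Q_def)
  then have "2 \<le> card B_Q" using card_mono[OF \<open>finite B_Q\<close>] by metis
  have "card (B_Q - {(0, c - 1), (a - 1, b)}) = card B_Q - 2"
    using removed \<open>finite B_Q\<close> by (simp add: card_Diff_subset)
  moreover have "(B_Q - {(0, c - 1), (a - 1, b)}) \<inter> B_T = {}" "(B_Q \<union> B_T) \<inter> B_B = {}"
    using B_T_shape B_B_shape sizes by (fastforce simp: B_Q_def)+
  ultimately show ?thesis
    using \<open>finite B_T\<close> \<open>finite B_B\<close> \<open>finite B_Q\<close> \<open>2 \<le> card B_Q\<close> card_B_Q
    by (simp add: B_M_def card_Un_disjoint Int_Un_distrib2 Diff_Int_distrib2)
qed

end

theorem proposition3p2:
  fixes n a b c :: nat and B_T B_B :: "(nat \<times> nat) set"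
  assumes "0 < a" "a < b" "b < c" "c < n - 1"
    and "card {b..<c} \<ge> 3" "card {0..<a} \<ge> 3" "card {c..<n} \<ge> 2" "card {a..<b} \<ge> 2"
    and "saturated_blocker ({c..<n} \<union> {0, c - 1}) B_T"
    and "saturated_blocker ({a..<b} \<union> {a - 1, b}) B_B"
  shows "let B_Q = {(r, l). r \<in> {0..<a} \<and> l \<in> {b..<c}} \<union> {(x, t). x \<in> {a..<b} \<and> t \<in> {c..<n}};
             B_M = (B_Q - {(0, c - 1), (a - 1, b)}) \<union> B_T \<union> B_B
         in saturated_blocker {0..<n} B_M \<and>
            card B_M = card {c..<n} * card {a..<b} + card {b..<c} * card {0..<a} + card B_T + card B_B - 2"
proof -
  interpret merged_blocker n a b c B_T B_B
    using assms by unfold_locales auto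
  have "B_M = ({(r, l). r \<in> {0..<a} \<and> l \<in> {b..<c}} \<union> {(x, t). x \<in> {a..<b} \<and> t \<in> {c..<n}}
      - {(0, c - 1), (a - 1, b)}) \<union> B_T \<union> B_B"
    by (simp add: B_M_def B_Q_def)
  then show ?thesis
    unfolding Let_def using saturated_B_M card_B_M by simp
qed

end
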